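(* Let $G$ be an abelian Hausdorff topological group and $\kappa$ a cardinal. The following are equivalent: (i) $G$ contains a subgroup topologically isomorphic to a direct sum of $\kappa$-many non-trivial topological groups; (ii) $G$ contains a topologically independent absolutely Cauchy summable set of size $\kappa$.
   Context: All groups are abelian; topological groups are Hausdorff. The direct sum $\bigoplus_{i\in I}H_i$ of topological groups is the subgroup of the product $\prod_{i\in I}H_i$ consisting of elements with finitely many non-zero coordinates, equipped with the subspace topology of the Tychonoff product topology. A subset $A\subseteq G$ is absolutely Cauchy summable if for every neighbourhood $U$ of $0$ there is a finite $F\subseteq A$ such that the subgroup $\langle A\setminus F\rangle$ generated by $A\setminus F$ is contained in $U$. A subset $A\subseteq G$ is topologically independent if $0\notin A$ and for every neighbourhood $W$ of $0$ there is a neighbourhood $U$ of $0$ such that for every finite $F\subseteq A$ and all integers $\{z_a:a\in F\}$, $\sum_{a\in F}z_aa\in U$ implies $z_aa\in W$ for all $a\in F$. *)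

theory Defs
  imports "HOL-Analysis.Analysis" "HOL-Library.Equipollence"
begin

definition ab_topgroup :: "'b topology \<Rightarrow> ('b \<Rightarrow> 'b \<Rightarrow> 'b) \<Rightarrow> 'b \<Rightarrow> ('b \<Rightarrow> 'b) \<Rightarrow> bool" where
  "ab_topgroup T p e n \<longleftrightarrow>
     e \<in> topspace T \<and>
     (\<forall>x\<in>topspace T. \<forall>y\<in>topspace T. p x y \<in> topspace T) \<and>
     (\<forall>x\<in>topspace T. n x \<in> topspace T) \<and>
     (\<forall>x\<in>topspace T. \<forall>y\<in>topspace T. \<forall>z\<in>topspace T. p (p x y) z = p x (p y z)) \<and>
     (\<forall>x\<in>topspace T. \<forall>y\<in>topspace T. p x y = p y x) \<and>
     (\<forall>x\<in>topspace T. p e x = x) \<and>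
     (\<forall>x\<in>topspace T. p (n x) x = e) \<and>
     Hausdorff_space T \<and>
     continuous_map (prod_topology T T) T (\<lambda>(x, y). p x y) \<and>
     continuous_map T T n"

definition dsum_carrier :: "'i set \<Rightarrow> ('i \<Rightarrow> 'b topology) \<Rightarrow> ('i \<Rightarrow> 'b) \<Rightarrow> ('i \<Rightarrow> 'b) set" where
  "dsum_carrier I T e = {x \<in> PiE I (\<lambda>i. topspace (T i)). finite {i \<in> I. x i \<noteq> e i}}"

definition dsum_topology :: "'i set \<Rightarrow> ('i \<Rightarrow> 'b topology) \<Rightarrow> ('i \<Rightarrow> 'b) \<Rightarrow> ('i \<Rightarrow> 'b) topology" where
  "dsum_topology I T e = subtopology (product_topology T I) (dsum_carrier I T e)"

definition dsum_add :: "'i set \<Rightarrow> ('i \<Rightarrow> 'b \<Rightarrow> 'b \<Rightarrow> 'b) \<Rightarrow> ('i \<Rightarrow> 'b) \<Rightarrow> ('i \<Rightarrow> 'b) \<Rightarrow> ('i \<Rightarrow> 'b)" where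
  "dsum_add I p x y = restrict (\<lambda>i. p i (x i) (y i)) I"

definition embeds_direct_sum ::
  "'i set \<Rightarrow> ('i \<Rightarrow> 'b topology) \<Rightarrow> ('i \<Rightarrow> 'b \<Rightarrow> 'b \<Rightarrow> 'b) \<Rightarrow> ('i \<Rightarrow> 'b) \<Rightarrow> ('i \<Rightarrow> 'b \<Rightarrow> 'b)
    \<Rightarrow> (('i \<Rightarrow> 'b) \<Rightarrow> 'a::{topological_ab_group_add, t2_space}) \<Rightarrow> bool" where
  "embeds_direct_sum I T p e n f \<longleftrightarrow>
     (\<forall>i\<in>I. ab_topgroup (T i) (p i) (e i) (n i) \<and> topspace (T i) \<noteq> {e i}) \<and>
     (\<forall>x\<in>dsum_carrier I T e. \<forall>y\<in>dsum_carrier I T e.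
        f (dsum_add I p x y) = f x + f y) \<and>
     homeomorphic_map (dsum_topology I T e) (top_of_set (f ` dsum_carrier I T e)) f"

definition is_subgroup :: "'a::ab_group_add set \<Rightarrow> bool" where
  "is_subgroup H \<longleftrightarrow> 0 \<in> H \<and> (\<forall>x\<in>H. \<forall>y\<in>H. x + y \<in> H) \<and> (\<forall>x\<in>H. - x \<in> H)"

definition gen_subgroup :: "'a::ab_group_add set \<Rightarrow> 'a set" where
  "gen_subgroup S = \<Inter>{H. is_subgroup H \<and> S \<subseteq> H}"

definition zmult :: "int \<Rightarrow> 'a::ab_group_add \<Rightarrow> 'a" where
  "zmult z a = (if 0 \<le> z then (\<Sum>k<nat z. a) else - (\<Sum>k<nat (- z). a))"

definition abs_cauchy_summable :: "'a::{topological_ab_group_add, t2_space} set \<Rightarrow> bool" where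
  "abs_cauchy_summable A \<longleftrightarrow>
     (\<forall>U. 0 \<in> interior U \<longrightarrow> (\<exists>F. finite F \<and> F \<subseteq> A \<and> gen_subgroup (A - F) \<subseteq> U))"

definition top_independent :: "'a::{topological_ab_group_add, t2_space} set \<Rightarrow> bool" where
  "top_independent A \<longleftrightarrow> 0 \<notin> A \<and>
     (\<forall>W. 0 \<in> interior W \<longrightarrow> (\<exists>U. 0 \<in> interior U \<and>
        (\<forall>F z. finite F \<and> F \<subseteq> A \<and> (\<Sum>a\<in>F. zmult (z a) a) \<in> U
             \<longrightarrow> (\<forall>a\<in>F. zmult (z a) a \<in> W))))"

end

theory Submission
  imports Defs
begin

text \<open>
  Given a topological embedding of a direct sum of non-trivial groups, choose a non-zero element
  in every summand and take the images of the corresponding unit vectors.  Every zero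
  neighbourhood of the direct sum contains a box that is unrestricted outside finitely many
  coordinates; the subgroup generated by the remaining unit vectors lies in that box, which gives
  absolute Cauchy summability.  Since the image of the box is relatively open, an integer
  combination close to zero comes from an element of the box, and so does each of its summands,
  which gives topological independence.

  Conversely, for a topologically independent, absolutely Cauchy summable set A indexed by I,
  sum the coordinates of the direct sum of the cyclic subgroups generated by the elements of A.
  Independence says that a small sum has small coordinates, which makes the map injective and
  open onto its image; summability says that small coordinates on a suitable finite set of
  indices give a small sum, which makes it continuous.
\<close>

lemma zmult_0 [simp]: "zmult 0 a = 0"
  by (simp add: zmult_def)

lemma zmult_1 [simp]: "zmult 1 a = a"
  by (simp add: zmult_def)

lemma zmult_add1: "zmult (z + 1) a = zmult z a + a"
proof (cases "0 \<le> z")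
  case True
  then have "nat (z + 1) = Suc (nat z)" by simp
  with True show ?thesis by (simp add: zmult_def add.commute)
next
  case False
  then have z: "nat (- z) = Suc (nat (- (z + 1)))" by simp
  show ?thesis
  proof (cases "z = -1")
    case False
    with \<open>\<not> 0 \<le> z\<close> have "\<not> 0 \<le> z + 1" by simp
    with \<open>\<not> 0 \<le> z\<close> z show ?thesis by (simp add: zmult_def algebra_simps)
  qed (simp add: zmult_def)
qed

lemma zmult_add: "zmult (z + w) a = zmult z a + zmult w a"
proof (induction w rule: int_induct[where k = 0])
  case (step1 i)
  then show ?case
    using zmult_add1[of "z + i" a] zmult_add1[of i a] by (simp add: algebra_simps)
next
  case (step2 i)
  then show ?case
    using zmult_add1[of "z + (i - 1)" a] zmult_add1[of "i - 1" a] by (simp add: algebra_simps)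
qed simp

lemma zmult_minus: "zmult (- z) a = - zmult z a"
  using zmult_add[of z "- z" a] by (simp add: eq_neg_iff_add_eq_0 add.commute)

lemma is_subgroup_sum:
  assumes "is_subgroup H" "finite F" "\<And>x. x \<in> F \<Longrightarrow> g x \<in> H"
  shows "sum g F \<in> H"
  using assms(2,3) by (induction F rule: finite_induct) (use assms(1) in \<open>auto simp: is_subgroup_def\<close>)

lemma is_subgroup_zmult:
  assumes "is_subgroup H" "a \<in> H"
  shows "zmult z a \<in> H"
proof -
  have "(\<Sum>k<m. a) \<in> H" for m :: nat
    using is_subgroup_sum[OF assms(1), of "{..<m}" "\<lambda>_. a"] assms(2) by simp
  then show ?thesis
    using assms(1) unfolding zmult_def is_subgroup_def by auto
qed

lemma is_subgroup_gen_subgroup: "is_subgroup (gen_subgroup S)"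
  unfolding gen_subgroup_def is_subgroup_def by auto

lemma gen_subgroup_superset: "S \<subseteq> gen_subgroup S"
  unfolding gen_subgroup_def by auto

lemma gen_subgroup_least: "is_subgroup H \<Longrightarrow> S \<subseteq> H \<Longrightarrow> gen_subgroup S \<subseteq> H"
  unfolding gen_subgroup_def by blast

definition cyclic_subgroup :: "'a::ab_group_add \<Rightarrow> 'a set" where
  "cyclic_subgroup a = range (\<lambda>z. zmult z a)"

lemma is_subgroup_cyclic_subgroup: "is_subgroup (cyclic_subgroup a)"
  unfolding is_subgroup_def cyclic_subgroup_def
proof (intro conjI ballI)
  show "0 \<in> range (\<lambda>z. zmult z a)"
    using zmult_0 by (metis rangeI)
next
  fix x y assume "x \<in> range (\<lambda>z. zmult z a)" "y \<in> range (\<lambda>z. zmult z a)"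
  then obtain z w where "x = zmult z a" "y = zmult w a" by blast
  then show "x + y \<in> range (\<lambda>z. zmult z a)"
    by (metis rangeI zmult_add)
next
  fix x assume "x \<in> range (\<lambda>z. zmult z a)"
  then obtain z where "x = zmult z a" by blast
  then show "- x \<in> range (\<lambda>z. zmult z a)"
    by (metis rangeI zmult_minus)
qed

lemma generator_in_cyclic_subgroup: "a \<in> cyclic_subgroup a"
  unfolding cyclic_subgroup_def by (metis rangeI zmult_1)

lemma Hausdorff_space_euclidean_t2: "Hausdorff_space (euclidean :: 'a::t2_space topology)"
  unfolding Hausdorff_space_def disjnt_def by (simp add: separation_t2)

lemma ab_topgroup_subgroup:
  fixes H :: "'a::{topological_ab_group_add, t2_space} set"
  assumes H: "is_subgroup H"
  shows "ab_topgroup (top_of_set H) (+) 0 uminus"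
proof -
  have "continuous_on (H \<times> H) (\<lambda>z. fst z + snd z)" "continuous_on H uminus"
    by (intro continuous_intros)+
  moreover have "(\<lambda>z. fst z + snd z) \<in> H \<times> H \<rightarrow> H" "uminus \<in> H \<rightarrow> H"
    using H unfolding is_subgroup_def by auto
  ultimately have "continuous_map (prod_topology (top_of_set H) (top_of_set H)) (top_of_set H) (\<lambda>(x, y). x + y)"
      "continuous_map (top_of_set H) (top_of_set H) uminus"
    unfolding prod_topology_subtopology_eu continuous_map_subtopology_eu by (simp_all add: case_prod_unfold)
  moreover have "Hausdorff_space (top_of_set H)"
    by (rule Hausdorff_space_subtopology[OF Hausdorff_space_euclidean_t2])
  ultimately show ?thesis
    using H unfolding ab_topgroup_def is_subgroup_def by (simp add: add.assoc add.commute)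
qed

lemma open_vimage_add_const:
  fixes c :: "'a::topological_monoid_add"
  assumes "open S"
  shows "open {x. x + c \<in> S}"
proof -
  have "open ((\<lambda>x. x + c) -` S)"
    using assms by (intro open_vimage continuous_intros)
  then show ?thesis by (simp add: vimage_def)
qed

lemma open_vimage_diff_const:
  fixes c :: "'a::topological_group_add"
  assumes "open S"
  shows "open {x. x - c \<in> S}"
  using open_vimage_add_const[OF assms, of "- c"] by simp

lemma zero_nhd_add_halves:
  fixes V :: "'a::topological_monoid_add set"
  assumes "open V" "0 \<in> V"
  obtains W where "open W" "0 \<in> W" "\<And>a b. a \<in> W \<Longrightarrow> b \<in> W \<Longrightarrow> a + b \<in> V"
proof -
  have "open ((\<lambda>z::'a \<times> 'a. fst z + snd z) -` V)"
    using assms(1) by (intro open_vimage continuous_intros)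
  moreover have "(0, 0) \<in> (\<lambda>z::'a \<times> 'a. fst z + snd z) -` V" using assms(2) by simp
  ultimately obtain A B where "open A" "open B" "(0, 0) \<in> A \<times> B"
      "A \<times> B \<subseteq> (\<lambda>z. fst z + snd z) -` V"
    by (rule open_prod_elim)
  then show ?thesis
    by (intro that[of "A \<inter> B"]) auto
qed

lemma zero_nhd_sum_small:
  fixes V :: "'a::topological_comm_monoid_add set"
  assumes "finite K" "open V" "0 \<in> V"
  obtains W where "open W" "0 \<in> W" "\<And>g. (\<forall>i\<in>K. g i \<in> W) \<Longrightarrow> sum g K \<in> V"
  using assms
proof (induction K arbitrary: V thesis rule: finite_induct)
  case empty
  then show ?case by (metis open_UNIV UNIV_I sum.empty)
next
  case (insert k K)
  obtain V1 where V1: "open V1" "0 \<in> V1" "\<And>a b. a \<in> V1 \<Longrightarrow> b \<in> V1 \<Longrightarrow> a + b \<in> V"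
    using zero_nhd_add_halves[OF insert.prems(2,3)] by blast
  obtain W where W: "open W" "0 \<in> W" "\<And>g. (\<forall>i\<in>K. g i \<in> W) \<Longrightarrow> sum g K \<in> V1"
    using insert.IH[OF _ V1(1,2)] by blast
  show ?case
  proof (rule insert.prems(1)[of "V1 \<inter> W"])
    fix g assume "\<forall>i\<in>insert k K. g i \<in> V1 \<inter> W"
    then show "sum g (insert k K) \<in> V"
      using V1(3) W(3) insert.hyps by simp
  qed (use V1 W in auto)
qed

lemma ab_topgroupD:
  assumes "ab_topgroup T p e n"
  shows ab_topgroup_zero: "e \<in> topspace T"
    and ab_topgroup_add: "\<And>x y. x \<in> topspace T \<Longrightarrow> y \<in> topspace T \<Longrightarrow> p x y \<in> topspace T"
    and ab_topgroup_neg: "\<And>x. x \<in> topspace T \<Longrightarrow> n x \<in> topspace T"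
    and ab_topgroup_left_zero: "\<And>x. x \<in> topspace T \<Longrightarrow> p e x = x"
    and ab_topgroup_right_zero: "\<And>x. x \<in> topspace T \<Longrightarrow> p x e = x"
    and ab_topgroup_right_neg: "\<And>x. x \<in> topspace T \<Longrightarrow> p x (n x) = e"
    and ab_topgroup_neg_zero: "n e = e"
proof -
  note a = assms[unfolded ab_topgroup_def]
  show e: "e \<in> topspace T" using a by blast
  show "\<And>x y. x \<in> topspace T \<Longrightarrow> y \<in> topspace T \<Longrightarrow> p x y \<in> topspace T" using a by blast
  show "\<And>x. x \<in> topspace T \<Longrightarrow> n x \<in> topspace T" using a by blast
  show "\<And>x. x \<in> topspace T \<Longrightarrow> p e x = x" using a by blast
  show "\<And>x. x \<in> topspace T \<Longrightarrow> p x e = x" using a by metis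
  show "\<And>x. x \<in> topspace T \<Longrightarrow> p x (n x) = e" using a by metis
  have "p (n e) e = e" "p (n e) e = n e" using a e by metis+
  then show "n e = e" by simp
qed

lemma topspace_dsum_topology: "topspace (dsum_topology I T e) = dsum_carrier I T e"
  unfolding dsum_topology_def dsum_carrier_def by auto

lemma dsum_carrier_PiE: "x \<in> dsum_carrier I T e \<Longrightarrow> x \<in> PiE I (\<lambda>i. topspace (T i))"
  unfolding dsum_carrier_def by auto

lemma dsum_zero_in_carrier:
  assumes "\<forall>i\<in>I. ab_topgroup (T i) (p i) (e i) (n i)"
  shows "restrict e I \<in> dsum_carrier I T e"
  using ab_topgroup_zero[OF assms[rule_format]] unfolding dsum_carrier_def by auto

lemma dsum_add_in_carrier:
  assumes G: "\<forall>i\<in>I. ab_topgroup (T i) (p i) (e i) (n i)"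
    and x: "x \<in> dsum_carrier I T e" and y: "y \<in> dsum_carrier I T e"
  shows "dsum_add I p x y \<in> dsum_carrier I T e"
proof -
  have "{i \<in> I. dsum_add I p x y i \<noteq> e i} \<subseteq> {i \<in> I. x i \<noteq> e i} \<union> {i \<in> I. y i \<noteq> e i}"
    using ab_topgroup_left_zero[OF G[rule_format]] ab_topgroup_zero[OF G[rule_format]]
    unfolding dsum_add_def by fastforce
  then have "finite {i \<in> I. dsum_add I p x y i \<noteq> e i}"
    using x y unfolding dsum_carrier_def by (auto intro: finite_subset)
  moreover have "dsum_add I p x y \<in> PiE I (\<lambda>i. topspace (T i))"
    using x y ab_topgroup_add[OF G[rule_format]] unfolding dsum_carrier_def dsum_add_def
    by (auto simp: PiE_iff)
  ultimately show ?thesis unfolding dsum_carrier_def by auto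
qed

lemma dsum_hom_zero:
  assumes G: "\<forall>i\<in>I. ab_topgroup (T i) (p i) (e i) (n i)"
    and hom: "\<forall>x\<in>dsum_carrier I T e. \<forall>y\<in>dsum_carrier I T e. f (dsum_add I p x y) = f x + f y"
  shows "f (restrict e I) = (0 :: 'a::group_add)"
proof -
  have "dsum_add I p (restrict e I) (restrict e I) = restrict e I"
    using ab_topgroup_left_zero[OF G[rule_format]] ab_topgroup_zero[OF G[rule_format]]
    unfolding dsum_add_def by (auto simp: fun_eq_iff)
  then have "f (restrict e I) + f (restrict e I) = f (restrict e I)"
    using hom dsum_zero_in_carrier[OF G] by metis
  then show ?thesis by (metis add.right_neutral add_left_cancel)
qed

definition dsum_vanishing :: "'i set \<Rightarrow> ('i \<Rightarrow> 'b topology) \<Rightarrow> ('i \<Rightarrow> 'b) \<Rightarrow> 'i set \<Rightarrow> ('i \<Rightarrow> 'b) set" where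
  "dsum_vanishing I T e K = {x \<in> dsum_carrier I T e. \<forall>i\<in>K \<inter> I. x i = e i}"

lemma is_subgroup_hom_image_dsum_vanishing:
  fixes f :: "('i \<Rightarrow> 'b) \<Rightarrow> 'a::ab_group_add"
  assumes G: "\<forall>i\<in>I. ab_topgroup (T i) (p i) (e i) (n i)"
    and hom: "\<forall>x\<in>dsum_carrier I T e. \<forall>y\<in>dsum_carrier I T e. f (dsum_add I p x y) = f x + f y"
  shows "is_subgroup (f ` dsum_vanishing I T e K)"
  unfolding is_subgroup_def
proof (intro conjI ballI)
  have "restrict e I \<in> dsum_vanishing I T e K"
    using dsum_zero_in_carrier[OF G] unfolding dsum_vanishing_def by auto
  then show "0 \<in> f ` dsum_vanishing I T e K"
    using dsum_hom_zero[OF G hom] by (metis image_eqI)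
next
  fix u v assume "u \<in> f ` dsum_vanishing I T e K" "v \<in> f ` dsum_vanishing I T e K"
  then obtain x y where xy: "x \<in> dsum_vanishing I T e K" "y \<in> dsum_vanishing I T e K"
      and uv: "u = f x" "v = f y"
    by blast
  then have "dsum_add I p x y \<in> dsum_vanishing I T e K"
    using dsum_add_in_carrier[OF G] ab_topgroupD[OF G[rule_format]] unfolding dsum_vanishing_def dsum_add_def
    by (auto simp: restrict_def)
  moreover have "f (dsum_add I p x y) = u + v"
    using hom xy uv unfolding dsum_vanishing_def by simp
  ultimately show "u + v \<in> f ` dsum_vanishing I T e K"
    by (metis image_eqI)
next
  fix u assume "u \<in> f ` dsum_vanishing I T e K"
  then obtain x where x: "x \<in> dsum_vanishing I T e K" and u: "u = f x" by blast
  note grp = ab_topgroupD[OF G[rule_format]]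
  define y where "y = restrict (\<lambda>i. n i (x i)) I"
  have xD: "x \<in> dsum_carrier I T e"
    using x unfolding dsum_vanishing_def by auto
  note xP = dsum_carrier_PiE[OF xD]
  have "{i \<in> I. y i \<noteq> e i} \<subseteq> {i \<in> I. x i \<noteq> e i}"
    using grp unfolding y_def by auto
  then have "finite {i \<in> I. y i \<noteq> e i}"
    using xD unfolding dsum_carrier_def by (auto intro: finite_subset)
  moreover have "y \<in> PiE I (\<lambda>i. topspace (T i))"
    using xP grp unfolding y_def by (auto simp: PiE_iff)
  ultimately have yD: "y \<in> dsum_carrier I T e"
    unfolding dsum_carrier_def by auto
  have yK: "y \<in> dsum_vanishing I T e K"
    using x yD grp unfolding dsum_vanishing_def y_def by auto
  have "dsum_add I p x y = restrict e I"
    using xP grp unfolding dsum_add_def y_def by (auto simp: fun_eq_iff PiE_iff)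
  then have "f x + f y = 0"
    using hom xD yD dsum_hom_zero[OF G hom] by metis
  then have "- u = f y" using u by (simp add: add_eq_0_iff)
  with yK show "- u \<in> f ` dsum_vanishing I T e K" by blast
qed

lemma dsum_vanishing_subset_box:
  fixes V :: "'i \<Rightarrow> 'b set"
  assumes "restrict e I \<in> PiE I V" "{i \<in> I. V i \<noteq> topspace (T i)} \<subseteq> K"
  shows "dsum_vanishing I T e K \<subseteq> PiE I V"
proof
  fix x assume x: "x \<in> dsum_vanishing I T e K"
  then have xP: "x \<in> PiE I (\<lambda>i. topspace (T i))"
    unfolding dsum_vanishing_def using dsum_carrier_PiE by blast
  have "x i \<in> V i" if i: "i \<in> I" for i
  proof (cases "V i = topspace (T i)")
    case False
    then have "x i = e i" using x assms(2) i unfolding dsum_vanishing_def by auto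
    then show ?thesis using assms(1) i by auto
  qed (use xP i in auto)
  with xP show "x \<in> PiE I V" by (auto simp: PiE_iff)
qed

lemma embeds_direct_sumD:
  assumes "embeds_direct_sum I T p e n f"
  shows embeds_groups: "\<forall>i\<in>I. ab_topgroup (T i) (p i) (e i) (n i)"
    and embeds_nontrivial: "\<And>i. i \<in> I \<Longrightarrow> topspace (T i) \<noteq> {e i}"
    and embeds_hom: "\<forall>x\<in>dsum_carrier I T e. \<forall>y\<in>dsum_carrier I T e. f (dsum_add I p x y) = f x + f y"
    and embeds_homeomorphic: "homeomorphic_map (dsum_topology I T e) (top_of_set (f ` dsum_carrier I T e)) f"
    and embeds_inj: "inj_on f (dsum_carrier I T e)"
  using assms homeomorphic_imp_injective_map[of "dsum_topology I T e" _ f]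
  unfolding embeds_direct_sum_def topspace_dsum_topology by blast+

lemma embeds_direct_sum_zero_box:
  assumes E: "embeds_direct_sum I T p e n f" and Q: "open Q" "0 \<in> Q"
  obtains V where "\<forall>i\<in>I. openin (T i) (V i)" "finite {i\<in>I. V i \<noteq> topspace (T i)}"
    "restrict e I \<in> PiE I V" "f ` (PiE I V \<inter> dsum_carrier I T e) \<subseteq> Q"
    "\<exists>Q'. open Q' \<and> f ` (PiE I V \<inter> dsum_carrier I T e) = f ` dsum_carrier I T e \<inter> Q'"
proof -
  let ?D = "dsum_carrier I T e"
  note homeo = embeds_homeomorphic[OF E]
  have "openin (top_of_set (f ` ?D)) (f ` ?D \<inter> Q)"
    unfolding openin_open using Q(1) by blast
  from openin_continuous_map_preimage[OF homeomorphic_imp_continuous_map[OF homeo] this]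
  moreover have "{x \<in> topspace (dsum_topology I T e). f x \<in> f ` ?D \<inter> Q} = {x \<in> ?D. f x \<in> Q}"
    unfolding topspace_dsum_topology by blast
  ultimately have "openin (dsum_topology I T e) {x \<in> ?D. f x \<in> Q}"
    by simp
  then have "openin (subtopology (product_topology T I) ?D) {x \<in> ?D. f x \<in> Q}"
    unfolding dsum_topology_def .
  then obtain Q' where Q': "openin (product_topology T I) Q'" and eq: "{x \<in> ?D. f x \<in> Q} = Q' \<inter> ?D"
    unfolding openin_subtopology by blast
  have "restrict e I \<in> {x \<in> ?D. f x \<in> Q}"
    using dsum_zero_in_carrier[OF embeds_groups[OF E]]
      dsum_hom_zero[OF embeds_groups[OF E] embeds_hom[OF E]] Q(2) by (simp del: restrict_apply)
  then have "restrict e I \<in> Q'"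
    unfolding eq by simp
  then obtain V where V: "finite {i \<in> I. V i \<noteq> topspace (T i)}" "\<forall>i \<in> I. openin (T i) (V i)"
      "restrict e I \<in> PiE I V" "PiE I V \<subseteq> Q'"
    using Q' unfolding openin_product_topology_alt by meson
  have "f ` (PiE I V \<inter> ?D) \<subseteq> Q"
  proof
    fix u assume "u \<in> f ` (PiE I V \<inter> ?D)"
    then obtain x where "x \<in> PiE I V" "x \<in> ?D" "u = f x" by blast
    then have "x \<in> {x \<in> ?D. f x \<in> Q}" unfolding eq using V(4) by blast
    with \<open>u = f x\<close> show "u \<in> Q" by simp
  qed
  moreover have "openin (dsum_topology I T e) (PiE I V \<inter> ?D)"
    unfolding dsum_topology_def using V(1,2) by (simp add: openin_PiE_gen openin_subtopology_Int)
  then have "openin (top_of_set (f ` ?D)) (f ` (PiE I V \<inter> ?D))"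
    using homeomorphic_imp_open_map[OF homeo] unfolding open_map_def by blast
  then have "\<exists>Q'. open Q' \<and> f ` (PiE I V \<inter> ?D) = f ` ?D \<inter> Q'"
    unfolding openin_open .
  ultimately show ?thesis
    using that V(1-3) by blast
qed

section \<open>An embedded direct sum yields an independent summable set\<close>

locale direct_sum_embedding =
  fixes I :: "'i set" and T :: "'i \<Rightarrow> 'b topology" and p :: "'i \<Rightarrow> 'b \<Rightarrow> 'b \<Rightarrow> 'b"
    and e :: "'i \<Rightarrow> 'b" and n :: "'i \<Rightarrow> 'b \<Rightarrow> 'b"
    and f :: "('i \<Rightarrow> 'b) \<Rightarrow> 'a::{topological_ab_group_add, t2_space}"
    and g :: "'i \<Rightarrow> 'b"
  assumes embeds: "embeds_direct_sum I T p e n f"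
    and g_in_topspace: "\<And>i. i \<in> I \<Longrightarrow> g i \<in> topspace (T i)"
    and g_nonzero: "\<And>i. i \<in> I \<Longrightarrow> g i \<noteq> e i"
begin

definition dsum_unit :: "'i \<Rightarrow> 'i \<Rightarrow> 'b" where
  "dsum_unit i = restrict (\<lambda>j. if j = i then g i else e j) I"

definition basis :: "'i \<Rightarrow> 'a" where
  "basis i = f (dsum_unit i)"

lemmas groups = embeds_groups[OF embeds]
lemmas hom = embeds_hom[OF embeds]

lemma image_dsum_vanishing_subgroup: "is_subgroup (f ` dsum_vanishing I T e K)"
  by (rule is_subgroup_hom_image_dsum_vanishing[OF groups hom])

lemma dsum_unit_in_carrier:
  assumes i: "i \<in> I"
  shows "dsum_unit i \<in> dsum_carrier I T e"
proof -
  have "{j \<in> I. dsum_unit i j \<noteq> e j} \<subseteq> {i}"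
    unfolding dsum_unit_def by auto
  then have "finite {j \<in> I. dsum_unit i j \<noteq> e j}"
    by (rule finite_subset) simp
  moreover have "dsum_unit i \<in> PiE I (\<lambda>j. topspace (T j))"
    using g_in_topspace[OF i] ab_topgroup_zero[OF groups[rule_format]] unfolding dsum_unit_def by auto
  ultimately show ?thesis
    unfolding dsum_carrier_def by auto
qed

lemma zmult_basis_in_image_dsum_vanishing:
  assumes "i \<in> I" "i \<notin> K"
  shows "zmult z (basis i) \<in> f ` dsum_vanishing I T e K"
proof (rule is_subgroup_zmult[OF image_dsum_vanishing_subgroup])
  show "basis i \<in> f ` dsum_vanishing I T e K"
    using assms dsum_unit_in_carrier unfolding basis_def dsum_vanishing_def dsum_unit_def by auto
qed

lemma inj_on_basis: "inj_on basis I"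
proof (rule inj_onI)
  fix i j assume ij: "i \<in> I" "j \<in> I" "basis i = basis j"
  then have "dsum_unit i = dsum_unit j"
    using inj_onD[OF embeds_inj[OF embeds]] dsum_unit_in_carrier unfolding basis_def by blast
  then have "dsum_unit i i = dsum_unit j i" by simp
  then show "i = j"
    using g_nonzero ij(1) unfolding dsum_unit_def by (auto split: if_splits)
qed

lemma basis_nonzero: "i \<in> I \<Longrightarrow> basis i \<noteq> 0"
proof
  assume i: "i \<in> I" and "basis i = 0"
  then have "f (dsum_unit i) = f (restrict e I)"
    using dsum_hom_zero[OF groups hom] unfolding basis_def by (simp del: restrict_apply)
  then have "dsum_unit i = restrict e I"
    using inj_onD[OF embeds_inj[OF embeds]] dsum_unit_in_carrier[OF i]
      dsum_zero_in_carrier[OF groups] by blast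
  then have "dsum_unit i i = e i" using i by simp
  then show False using g_nonzero[OF i] i unfolding dsum_unit_def by simp
qed

lemma abs_cauchy_summable_basis: "abs_cauchy_summable (basis ` I)"
  unfolding abs_cauchy_summable_def
proof (intro allI impI)
  fix U :: "'a set" assume U: "0 \<in> interior U"
  obtain V where V: "\<forall>i\<in>I. openin (T i) (V i)" "finite {i \<in> I. V i \<noteq> topspace (T i)}"
      "restrict e I \<in> PiE I V" "f ` (PiE I V \<inter> dsum_carrier I T e) \<subseteq> interior U"
      "\<exists>Q. open Q \<and> f ` (PiE I V \<inter> dsum_carrier I T e) = f ` dsum_carrier I T e \<inter> Q"
    by (rule embeds_direct_sum_zero_box[OF embeds open_interior U])
  define K where "K = {i \<in> I. V i \<noteq> topspace (T i)}"
  have "basis ` I - basis ` K \<subseteq> f ` dsum_vanishing I T e K"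
    using zmult_basis_in_image_dsum_vanishing[of _ K 1] by auto
  then have "gen_subgroup (basis ` I - basis ` K) \<subseteq> f ` dsum_vanishing I T e K"
    by (rule gen_subgroup_least[OF image_dsum_vanishing_subgroup])
  also have "\<dots> \<subseteq> f ` (PiE I V \<inter> dsum_carrier I T e)"
    using dsum_vanishing_subset_box[OF V(3), where K = K] unfolding K_def dsum_vanishing_def by blast
  also have "\<dots> \<subseteq> U"
    using V(4) interior_subset by blast
  finally show "\<exists>F. finite F \<and> F \<subseteq> basis ` I \<and> gen_subgroup (basis ` I - F) \<subseteq> U"
    using V(2) unfolding K_def by blast
qed

lemma combination_preimage:
  assumes F: "finite F" "F \<subseteq> basis ` I" and i0: "i0 \<in> I" "basis i0 \<in> F"
  obtains x y where "x \<in> dsum_carrier I T e" "f x = (\<Sum>a\<in>F. zmult (z a) a)"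
    "y \<in> dsum_vanishing I T e (I - {i0})" "f y = zmult (z (basis i0)) (basis i0)" "x i0 = y i0"
proof -
  have "zmult (z (basis i0)) (basis i0) \<in> f ` dsum_vanishing I T e (I - {i0})"
    using zmult_basis_in_image_dsum_vanishing i0(1) by simp
  then obtain y where y_eq: "zmult (z (basis i0)) (basis i0) = f y"
      and y: "y \<in> dsum_vanishing I T e (I - {i0})"
    by (rule imageE)
  have "zmult (z a) a \<in> f ` dsum_vanishing I T e {i0}" if "a \<in> F - {basis i0}" for a
  proof -
    from that F(2) obtain j where "j \<in> I" "j \<noteq> i0" "a = basis j" by blast
    then show ?thesis using zmult_basis_in_image_dsum_vanishing[of j "{i0}"] by simp
  qed
  then have "(\<Sum>a\<in>F - {basis i0}. zmult (z a) a) \<in> f ` dsum_vanishing I T e {i0}"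
    using F(1) by (intro is_subgroup_sum[OF image_dsum_vanishing_subgroup]) auto
  then obtain w where w_eq: "(\<Sum>a\<in>F - {basis i0}. zmult (z a) a) = f w"
      and w: "w \<in> dsum_vanishing I T e {i0}"
    by (rule imageE)
  have yD: "y \<in> dsum_carrier I T e" and wD: "w \<in> dsum_carrier I T e"
    using y w unfolding dsum_vanishing_def by auto
  have "f (dsum_add I p y w) = (\<Sum>a\<in>F. zmult (z a) a)"
    using hom yD wD y_eq w_eq sum.remove[OF F(1) i0(2), of "\<lambda>a. zmult (z a) a"] by simp
  moreover have "y i0 \<in> topspace (T i0)" "w i0 = e i0"
    using w i0(1) dsum_carrier_PiE[OF yD] unfolding dsum_vanishing_def by auto
  then have "dsum_add I p y w i0 = y i0"
    using i0(1) ab_topgroup_right_zero[OF groups[rule_format, OF i0(1)]] unfolding dsum_add_def by simp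
  ultimately show ?thesis
    by (rule that[OF dsum_add_in_carrier[OF groups yD wD] _ y y_eq[symmetric]])
qed

lemma top_independent_basis: "top_independent (basis ` I)"
  unfolding top_independent_def
proof (intro conjI allI impI)
  show "0 \<notin> basis ` I" using basis_nonzero by auto
next
  let ?D = "dsum_carrier I T e"
  fix W :: "'a set" assume W: "0 \<in> interior W"
  obtain V where "\<forall>i\<in>I. openin (T i) (V i)" "finite {i \<in> I. V i \<noteq> topspace (T i)}"
      and V: "restrict e I \<in> PiE I V" "f ` (PiE I V \<inter> ?D) \<subseteq> interior W"
      and "\<exists>Q. open Q \<and> f ` (PiE I V \<inter> ?D) = f ` ?D \<inter> Q"
    by (rule embeds_direct_sum_zero_box[OF embeds open_interior W])
  then obtain Q where Q: "open Q" "f ` (PiE I V \<inter> ?D) = f ` ?D \<inter> Q"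
    by blast
  have "restrict e I \<in> PiE I V \<inter> ?D"
    using V(1) dsum_zero_in_carrier[OF groups] by simp
  then have "f (restrict e I) \<in> Q"
    using Q(2) by blast
  then have "0 \<in> interior Q"
    using dsum_hom_zero[OF groups hom] Q(1) by (simp add: interior_open del: restrict_apply)
  moreover have "zmult (z a) a \<in> W"
    if F: "finite F" "F \<subseteq> basis ` I" "(\<Sum>a\<in>F. zmult (z a) a) \<in> Q" and a: "a \<in> F" for F z a
  proof -
    obtain i0 where i0: "i0 \<in> I" "a = basis i0" using a F(2) by blast
    obtain x y where x: "x \<in> ?D" "f x = (\<Sum>a\<in>F. zmult (z a) a)"
        and y: "y \<in> dsum_vanishing I T e (I - {i0})" "f y = zmult (z (basis i0)) (basis i0)" "x i0 = y i0"
      by (rule combination_preimage[OF F(1,2) i0(1)]) (use a i0(2) in simp)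
    have "f x \<in> f ` ?D \<inter> Q" using x(1) F(3) unfolding x(2)[symmetric] by blast
    then have "f x \<in> f ` (PiE I V \<inter> ?D)" using Q(2) by simp
    then obtain x' where "x' \<in> PiE I V" "x' \<in> ?D" "f x = f x'"
      by auto
    then have "x \<in> PiE I V"
      using inj_onD[OF embeds_inj[OF embeds] _ x(1)] by metis
    then have "y i \<in> V i" if "i \<in> I" for i
      using y(1,3) V(1) that unfolding dsum_vanishing_def by (cases "i = i0") (auto simp: PiE_iff)
    moreover have "y \<in> ?D"
      using y(1) unfolding dsum_vanishing_def by auto
    moreover note dsum_carrier_PiE[OF this]
    ultimately have "f y \<in> f ` (PiE I V \<inter> ?D)" by (auto simp: PiE_iff)
    then show ?thesis using y(2) i0(2) V(2) interior_subset by auto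
  qed
  ultimately show "\<exists>U. 0 \<in> interior U \<and> (\<forall>F z. finite F \<and> F \<subseteq> basis ` I \<and>
      (\<Sum>a\<in>F. zmult (z a) a) \<in> U \<longrightarrow> (\<forall>a\<in>F. zmult (z a) a \<in> W))"
    by blast
qed

end

lemma embeds_direct_sum_imp_independent_summable:
  assumes E: "embeds_direct_sum I T p e n (f :: ('i \<Rightarrow> 'b) \<Rightarrow> 'a::{topological_ab_group_add, t2_space})"
  shows "\<exists>A :: 'a set. top_independent A \<and> abs_cauchy_summable A \<and> A \<approx> I"
proof -
  have "\<forall>i\<in>I. \<exists>x. x \<in> topspace (T i) \<and> x \<noteq> e i"
    using embeds_nontrivial[OF E] ab_topgroup_zero[OF embeds_groups[OF E, rule_format]] by blast
  then obtain g where "\<forall>i\<in>I. g i \<in> topspace (T i) \<and> g i \<noteq> e i" by metis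
  then interpret direct_sum_embedding I T p e n f g
    using E by unfold_locales auto
  show ?thesis
    using top_independent_basis abs_cauchy_summable_basis inj_on_image_eqpoll_self[OF inj_on_basis]
    by blast
qed

section \<open>An independent summable set yields an embedded direct sum\<close>

locale independent_summable_family =
  fixes A :: "'a::{topological_ab_group_add, t2_space} set" and I :: "'i set" and h :: "'i \<Rightarrow> 'a"
  assumes independent: "top_independent A"
    and summable: "abs_cauchy_summable A"
    and bij_h: "bij_betw h I A"
begin

definition cyclic_top :: "'i \<Rightarrow> 'a topology" where
  "cyclic_top i = top_of_set (cyclic_subgroup (h i))"

definition dsum_sum :: "('i \<Rightarrow> 'a) \<Rightarrow> 'a" where
  "dsum_sum x = (\<Sum>i\<in>{i \<in> I. x i \<noteq> 0}. x i)"

definition dsum_diff :: "('i \<Rightarrow> 'a) \<Rightarrow> ('i \<Rightarrow> 'a) \<Rightarrow> 'i \<Rightarrow> 'a" where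
  "dsum_diff x y = restrict (\<lambda>i. x i - y i) I"

abbreviation D :: "('i \<Rightarrow> 'a) set" where
  "D \<equiv> dsum_carrier I cyclic_top (\<lambda>i. 0)"

abbreviation X :: "('i \<Rightarrow> 'a) topology" where
  "X \<equiv> dsum_topology I cyclic_top (\<lambda>i. 0)"

lemma topspace_cyclic_top [simp]: "topspace (cyclic_top i) = cyclic_subgroup (h i)"
  by (simp add: cyclic_top_def)

lemma mem_D_iff: "x \<in> D \<longleftrightarrow> x \<in> PiE I (\<lambda>i. cyclic_subgroup (h i)) \<and> finite {i \<in> I. x i \<noteq> 0}"
  unfolding dsum_carrier_def by simp

lemma D_coordinate: "x \<in> D \<Longrightarrow> i \<in> I \<Longrightarrow> \<exists>z. x i = zmult z (h i)"
  unfolding mem_D_iff cyclic_subgroup_def by (auto simp: PiE_iff)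

lemma D_extensional: "x \<in> D \<Longrightarrow> i \<notin> I \<Longrightarrow> x i = undefined"
  unfolding mem_D_iff by (auto simp: PiE_iff extensional_def)

lemma h_nonzero: "i \<in> I \<Longrightarrow> h i \<noteq> 0"
  using independent bij_betw_apply[OF bij_h] unfolding top_independent_def by metis

lemma dsum_sum_eq:
  assumes "finite S" "{i \<in> I. x i \<noteq> 0} \<subseteq> S" "S \<subseteq> I"
  shows "dsum_sum x = sum x S"
  unfolding dsum_sum_def using assms by (intro sum.mono_neutral_left) auto

lemma dsum_diff_in_D:
  assumes x: "x \<in> D" and y: "y \<in> D"
  shows "dsum_diff x y \<in> D"
proof -
  have "{i \<in> I. dsum_diff x y i \<noteq> 0} \<subseteq> {i \<in> I. x i \<noteq> 0} \<union> {i \<in> I. y i \<noteq> 0}"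
    unfolding dsum_diff_def by auto
  moreover have "finite ({i \<in> I. x i \<noteq> 0} \<union> {i \<in> I. y i \<noteq> 0})"
    using x y unfolding mem_D_iff by simp
  ultimately have "finite {i \<in> I. dsum_diff x y i \<noteq> 0}"
    by (rule finite_subset)
  moreover have "x i - y i \<in> cyclic_subgroup (h i)" if "i \<in> I" for i
  proof -
    have "x i \<in> cyclic_subgroup (h i)" "y i \<in> cyclic_subgroup (h i)"
      using x y that unfolding mem_D_iff by (auto simp: PiE_iff)
    then show ?thesis
      using is_subgroup_cyclic_subgroup[of "h i"] unfolding is_subgroup_def
      by (metis diff_conv_add_uminus)
  qed
  ultimately show ?thesis
    unfolding mem_D_iff dsum_diff_def by auto
qed

lemma dsum_sum_pointwise:
  assumes x: "x \<in> D" and y: "y \<in> D" and "\<And>i. i \<in> I \<Longrightarrow> u i = x i + y i"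
  shows "dsum_sum u = dsum_sum x + dsum_sum y"
proof -
  define S where "S = {i \<in> I. x i \<noteq> 0} \<union> {i \<in> I. y i \<noteq> 0}"
  have S: "finite S" "S \<subseteq> I"
    using x y unfolding S_def mem_D_iff by auto
  have "dsum_sum u = sum u S"
    using assms(3) by (intro dsum_sum_eq[OF S(1) _ S(2)]) (auto simp: S_def)
  also have "\<dots> = (\<Sum>i\<in>S. x i + y i)"
    using assms(3) S(2) by (intro sum.cong) auto
  also have "\<dots> = sum x S + sum y S"
    by (rule sum.distrib)
  also have "\<dots> = dsum_sum x + dsum_sum y"
    using dsum_sum_eq[OF S(1) _ S(2), of x] dsum_sum_eq[OF S(1) _ S(2), of y] by (auto simp: S_def)
  finally show ?thesis .
qed

lemma dsum_sum_add:
  assumes "x \<in> D" "y \<in> D"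
  shows "dsum_sum (dsum_add I (\<lambda>i. (+)) x y) = dsum_sum x + dsum_sum y"
  by (rule dsum_sum_pointwise[OF assms]) (simp add: dsum_add_def)

lemma dsum_sum_diff:
  assumes "x \<in> D" "y \<in> D"
  shows "dsum_sum (dsum_diff x y) = dsum_sum x - dsum_sum y"
proof -
  have "dsum_sum x = dsum_sum (dsum_diff x y) + dsum_sum y"
    by (rule dsum_sum_pointwise[OF dsum_diff_in_D[OF assms] assms(2)]) (simp add: dsum_diff_def)
  then show ?thesis by simp
qed

lemma coordinates_small_if_sum_small:
  assumes W: "0 \<in> interior W"
  obtains U where "open U" "0 \<in> U" "\<And>d i. d \<in> D \<Longrightarrow> dsum_sum d \<in> U \<Longrightarrow> i \<in> I \<Longrightarrow> d i \<in> W"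
proof -
  obtain U0 where U0: "0 \<in> interior U0"
    and indep: "\<forall>F z. finite F \<and> F \<subseteq> A \<and> (\<Sum>a\<in>F. zmult (z a) a) \<in> U0
      \<longrightarrow> (\<forall>a\<in>F. zmult (z a) a \<in> W)"
    using independent[unfolded top_independent_def, THEN conjunct2, rule_format, OF W]
    by (elim exE conjE)
  have "d i \<in> W" if d: "d \<in> D" and sum: "dsum_sum d \<in> interior U0" and i: "i \<in> I" for d i
  proof (cases "d i = 0")
    case True
    then show ?thesis using W interior_subset by auto
  next
    case False
    define S where "S = {i \<in> I. d i \<noteq> 0}"
    have S: "finite S" "S \<subseteq> I" "i \<in> S"
      using d i False unfolding S_def mem_D_iff by auto
    obtain zz where zz: "\<And>j. j \<in> I \<Longrightarrow> d j = zmult (zz j) (h j)"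
      using D_coordinate[OF d] by metis
    define z where "z a = zz (the_inv_into I h a)" for a
    have z_h: "z (h j) = zz j" if "j \<in> I" for j
      unfolding z_def using the_inv_into_f_f[OF bij_betw_imp_inj_on[OF bij_h] that] by simp
    have inj_S: "inj_on h S"
      using inj_on_subset[OF bij_betw_imp_inj_on[OF bij_h] S(2)] .
    have "(\<Sum>a\<in>h ` S. zmult (z a) a) = (\<Sum>j\<in>S. zmult (z (h j)) (h j))"
      by (rule sum.reindex[OF inj_S, unfolded comp_def])
    also have "\<dots> = dsum_sum d"
      unfolding dsum_sum_def S_def using zz z_h by (intro sum.cong) auto
    finally have "(\<Sum>a\<in>h ` S. zmult (z a) a) \<in> U0"
      using sum interior_subset by auto
    moreover have "h ` S \<subseteq> A"
      using bij_betw_imp_surj_on[OF bij_h] S(2) by blast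
    ultimately have "zmult (z (h i)) (h i) \<in> W"
      using indep S(1,3) by blast
    then show ?thesis using zz z_h i by simp
  qed
  then show ?thesis
    using that[OF open_interior U0] by blast
qed

text \<open>Outside the finite set of indices the coordinates lie in the subgroup generated by a tail
  of A, which absolute Cauchy summability makes small.\<close>

lemma sum_small_if_coordinates_small:
  assumes V: "open V" "0 \<in> V"
  obtains K W where "finite K" "K \<subseteq> I" "open W" "0 \<in> W"
    "\<And>d. d \<in> D \<Longrightarrow> (\<forall>i\<in>K. d i \<in> W) \<Longrightarrow> dsum_sum d \<in> V"
proof -
  obtain V1 where V1: "open V1" "0 \<in> V1" "\<And>a b. a \<in> V1 \<Longrightarrow> b \<in> V1 \<Longrightarrow> a + b \<in> V"
    using zero_nhd_add_halves[OF V] by blast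
  have "0 \<in> interior V1"
    using V1(1,2) by (simp add: interior_open)
  then obtain F where F: "finite F" "gen_subgroup (A - F) \<subseteq> V1"
    using summable unfolding abs_cauchy_summable_def by blast
  define K where "K = {i \<in> I. h i \<in> F}"
  have "K \<subseteq> I" "h ` K \<subseteq> F"
    unfolding K_def by auto
  then have K: "finite K" "K \<subseteq> I"
    using finite_imageD[OF finite_subset[OF _ F(1)]] inj_on_subset[OF bij_betw_imp_inj_on[OF bij_h]]
    by blast+
  obtain W where W: "open W" "0 \<in> W" "\<And>g. (\<forall>i\<in>K. g i \<in> W) \<Longrightarrow> sum g K \<in> V1"
    using zero_nhd_sum_small[OF K(1) V1(1,2)] by blast
  have "dsum_sum d \<in> V" if d: "d \<in> D" and small: "\<forall>i\<in>K. d i \<in> W" for d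
  proof -
    define S where "S = {i \<in> I. d i \<noteq> 0} \<union> K"
    have S: "finite S" "S \<subseteq> I" "K \<subseteq> S"
      using d K unfolding S_def mem_D_iff by simp_all
    have "dsum_sum d = sum d S"
      by (rule dsum_sum_eq[OF S(1) _ S(2)]) (simp add: S_def)
    also have "\<dots> = sum d (S - K) + sum d K"
      by (rule sum.subset_diff[OF S(3,1)])
    finally have sum_split: "dsum_sum d = sum d (S - K) + sum d K" .
    have "d i \<in> gen_subgroup (A - F)" if i: "i \<in> S - K" for i
    proof -
      have iI: "i \<in> I" using i S(2) by blast
      have "h i \<in> A - F"
        using i iI bij_betw_apply[OF bij_h] unfolding K_def by auto
      then have "h i \<in> gen_subgroup (A - F)"
        by (rule subsetD[OF gen_subgroup_superset])
      moreover obtain z where "d i = zmult z (h i)"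
        using D_coordinate[OF d iI] by (elim exE)
      ultimately show ?thesis
        using is_subgroup_zmult[OF is_subgroup_gen_subgroup] by simp
    qed
    then have "sum d (S - K) \<in> V1"
      using is_subgroup_sum[OF is_subgroup_gen_subgroup] S(1) F(2) by (meson finite_Diff subsetD)
    moreover have "sum d K \<in> V1"
      using W(3) small by blast
    ultimately show ?thesis
      unfolding sum_split by (rule V1(3))
  qed
  then show ?thesis
    using that[OF K W(1,2)] by blast
qed

lemma inj_on_dsum_sum: "inj_on dsum_sum D"
proof (rule inj_onI)
  fix x y assume x: "x \<in> D" and y: "y \<in> D" and eq: "dsum_sum x = dsum_sum y"
  have d: "dsum_diff x y \<in> D"
    by (rule dsum_diff_in_D[OF x y])
  have zero: "dsum_diff x y k = 0" if k: "k \<in> I" for k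
  proof (rule ccontr)
    assume "dsum_diff x y k \<noteq> 0"
    then have "0 \<in> interior (- {dsum_diff x y k})"
      by (simp add: interior_open open_Compl)
    then obtain U where U: "open U" "0 \<in> U"
        "\<And>d i. d \<in> D \<Longrightarrow> dsum_sum d \<in> U \<Longrightarrow> i \<in> I \<Longrightarrow> d i \<in> - {dsum_diff x y k}"
      by (rule coordinates_small_if_sum_small) auto
    have "dsum_sum (dsum_diff x y) \<in> U"
      using U(2) dsum_sum_diff[OF x y] eq by simp
    from U(3)[OF d this k] show False by simp
  qed
  show "x = y"
  proof
    fix k
    show "x k = y k"
    proof (cases "k \<in> I")
      case True
      then show ?thesis using zero[OF True] unfolding dsum_diff_def by simp
    qed (simp add: D_extensional[OF x] D_extensional[OF y])
  qed
qed

lemma openin_box: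
  assumes "finite K" "\<And>i. i \<in> K \<Longrightarrow> open (G i)"
  shows "openin X (PiE I (\<lambda>i. if i \<in> K then cyclic_subgroup (h i) \<inter> G i else cyclic_subgroup (h i)) \<inter> D)"
  unfolding dsum_topology_def
proof (rule openin_subtopology_Int)
  let ?U = "\<lambda>i. if i \<in> K then cyclic_subgroup (h i) \<inter> G i else cyclic_subgroup (h i)"
  have "{i \<in> I. ?U i \<noteq> topspace (cyclic_top i)} \<subseteq> K"
    by (simp add: subset_iff)
  then have "finite {i \<in> I. ?U i \<noteq> topspace (cyclic_top i)}"
    using assms(1) by (rule finite_subset)
  moreover have "openin (cyclic_top i) (?U i)" for i
    using assms(2)[of i] unfolding cyclic_top_def by (simp add: openin_open_Int)
  ultimately show "openin (product_topology cyclic_top I) (PiE I ?U)"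
    unfolding openin_PiE_gen by blast
qed

lemma continuous_map_dsum_sum: "continuous_map X euclidean dsum_sum"
  unfolding continuous_map_def topspace_dsum_topology
proof (intro conjI allI impI)
  fix U :: "'a set" assume "openin euclidean U"
  then have U: "open U" by simp
  have "\<exists>N. openin X N \<and> x0 \<in> N \<and> N \<subseteq> {x \<in> D. dsum_sum x \<in> U}"
    if x0: "x0 \<in> D" "dsum_sum x0 \<in> U" for x0
  proof -
    have "open {w. w + dsum_sum x0 \<in> U}" "0 \<in> {w. w + dsum_sum x0 \<in> U}"
      using open_vimage_add_const[OF U] x0(2) by simp_all
    then obtain K W where K: "finite K" "K \<subseteq> I" and W: "open W" "0 \<in> W"
        and small: "\<And>d. d \<in> D \<Longrightarrow> (\<forall>i\<in>K. d i \<in> W) \<Longrightarrow> dsum_sum d + dsum_sum x0 \<in> U"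
      by (rule sum_small_if_coordinates_small) auto
    define N where "N = PiE I (\<lambda>i. if i \<in> K then cyclic_subgroup (h i) \<inter> {w. w - x0 i \<in> W}
      else cyclic_subgroup (h i)) \<inter> D"
    have "openin X N"
      unfolding N_def using K(1) open_vimage_diff_const[OF W(1)] by (rule openin_box)
    moreover have "x0 \<in> N"
      using x0(1) W(2) dsum_carrier_PiE[OF x0(1)] unfolding N_def by (auto simp: PiE_iff)
    moreover have "dsum_sum x \<in> U" if x: "x \<in> N" for x
    proof -
      have xD: "x \<in> D" using x unfolding N_def by blast
      have "\<forall>i\<in>K. dsum_diff x x0 i \<in> W"
        using x K(2) unfolding N_def dsum_diff_def by (auto simp: PiE_iff)
      then have "dsum_sum (dsum_diff x x0) + dsum_sum x0 \<in> U"
        using small dsum_diff_in_D[OF xD x0(1)] by blast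
      then show ?thesis using dsum_sum_diff[OF xD x0(1)] by simp
    qed
    ultimately show ?thesis
      unfolding N_def by blast
  qed
  then show "openin X {x \<in> D. dsum_sum x \<in> U}"
    unfolding topspace_dsum_topology[symmetric, of I cyclic_top "\<lambda>i. 0"]
    by (subst openin_subopen) (simp add: topspace_dsum_topology)
qed simp

lemma sum_near_imp_in_box:
  assumes x0: "x0 \<in> D" "x0 \<in> PiE I U" and U: "\<forall>i\<in>I. openin (cyclic_top i) (U i)"
    and fin: "finite {i \<in> I. U i \<noteq> cyclic_subgroup (h i)}"
  obtains U1 where "open U1" "0 \<in> U1" "\<And>x. x \<in> D \<Longrightarrow> dsum_sum x - dsum_sum x0 \<in> U1 \<Longrightarrow> x \<in> PiE I U"
proof -
  define K where "K = {i \<in> I. U i \<noteq> cyclic_subgroup (h i)}"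
  obtain G where G: "\<And>i. i \<in> I \<Longrightarrow> open (G i) \<and> U i = cyclic_subgroup (h i) \<inter> G i"
    using U unfolding cyclic_top_def openin_open by metis
  define W where "W = (\<Inter>i\<in>K. {w. w + x0 i \<in> G i})"
  have "finite K"
    using fin unfolding K_def .
  have "open W"
    unfolding W_def
  proof (rule open_INT[OF \<open>finite K\<close>], rule ballI)
    fix i assume "i \<in> K"
    then have "open (G i)" using G unfolding K_def by simp
    then show "open {w. w + x0 i \<in> G i}" by (rule open_vimage_add_const)
  qed
  moreover have "0 \<in> W"
    unfolding W_def K_def using x0(2) G by (auto simp: PiE_iff)
  ultimately have "0 \<in> interior W" by (simp add: interior_open)
  then obtain U1 where U1: "open U1" "0 \<in> U1"
      "\<And>d i. d \<in> D \<Longrightarrow> dsum_sum d \<in> U1 \<Longrightarrow> i \<in> I \<Longrightarrow> d i \<in> W"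
    by (rule coordinates_small_if_sum_small) auto
  have "x \<in> PiE I U" if x: "x \<in> D" and near: "dsum_sum x - dsum_sum x0 \<in> U1" for x
  proof -
    have small: "dsum_diff x x0 i \<in> W" if "i \<in> I" for i
      using U1(3)[OF dsum_diff_in_D[OF x x0(1)] _ that] near dsum_sum_diff[OF x x0(1)] by simp
    have "x i \<in> U i" if i: "i \<in> I" for i
    proof (cases "i \<in> K")
      case True
      then have "dsum_diff x x0 i + x0 i \<in> G i"
        using small[OF i] unfolding W_def by blast
      then have "x i \<in> G i"
        using i unfolding dsum_diff_def by simp
      then show ?thesis
        using G[OF i] x i unfolding mem_D_iff by (auto simp: PiE_iff)
    next
      case False
      then show ?thesis
        using x i unfolding K_def mem_D_iff by (auto simp: PiE_iff)
    qed
    then show ?thesis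
      using D_extensional[OF x] by (auto simp: PiE_iff extensional_def)
  qed
  with U1(1,2) show ?thesis by (rule that)
qed

lemma open_map_dsum_sum: "open_map X (top_of_set (dsum_sum ` D)) dsum_sum"
  unfolding open_map_def
proof (intro allI impI)
  fix Ob assume "openin X Ob"
  then obtain O' where O': "openin (product_topology cyclic_top I) O'" and Ob: "Ob = O' \<inter> D"
    unfolding dsum_topology_def openin_subtopology by blast
  have "\<exists>T. openin (top_of_set (dsum_sum ` D)) T \<and> v \<in> T \<and> T \<subseteq> dsum_sum ` Ob"
    if v: "v \<in> dsum_sum ` Ob" for v
  proof -
    obtain x0 where x0: "x0 \<in> O'" "x0 \<in> D" and v_eq: "v = dsum_sum x0"
      using v Ob by blast
    obtain U where fin: "finite {i \<in> I. U i \<noteq> topspace (cyclic_top i)}"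
        and U: "\<forall>i\<in>I. openin (cyclic_top i) (U i)" "x0 \<in> PiE I U" "PiE I U \<subseteq> O'"
      using O' x0(1) unfolding openin_product_topology_alt by meson
    obtain U1 where U1: "open U1" "0 \<in> U1"
        "\<And>x. x \<in> D \<Longrightarrow> dsum_sum x - dsum_sum x0 \<in> U1 \<Longrightarrow> x \<in> PiE I U"
      by (rule sum_near_imp_in_box[OF x0(2) U(2,1)]) (use fin in auto)
    define T where "T = dsum_sum ` D \<inter> {w. w - v \<in> U1}"
    have "openin (top_of_set (dsum_sum ` D)) T"
      unfolding T_def using open_vimage_diff_const[OF U1(1)] by (blast intro: openin_open_Int)
    moreover have "v \<in> T"
      unfolding T_def using v_eq x0(2) U1(2) by simp
    moreover have "T \<subseteq> dsum_sum ` Ob"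
      unfolding T_def Ob using U1(3) U(3) v_eq by blast
    ultimately show ?thesis by blast
  qed
  then show "openin (top_of_set (dsum_sum ` D)) (dsum_sum ` Ob)"
    by (subst openin_subopen) blast
qed

lemma embeds_direct_sum_cyclic: "embeds_direct_sum I cyclic_top (\<lambda>i. (+)) (\<lambda>i. 0) (\<lambda>i. uminus) dsum_sum"
  unfolding embeds_direct_sum_def
proof (intro conjI ballI)
  fix i assume i: "i \<in> I"
  show "ab_topgroup (cyclic_top i) (+) 0 uminus"
    unfolding cyclic_top_def by (rule ab_topgroup_subgroup[OF is_subgroup_cyclic_subgroup])
  show "topspace (cyclic_top i) \<noteq> {0}"
    using generator_in_cyclic_subgroup h_nonzero[OF i] by auto
next
  show "homeomorphic_map X (top_of_set (dsum_sum ` D)) dsum_sum"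
  proof (rule bijective_open_imp_homeomorphic_map[OF _ open_map_dsum_sum])
    show "continuous_map X (top_of_set (dsum_sum ` D)) dsum_sum"
      using continuous_map_dsum_sum
      by (simp add: continuous_map_in_subtopology topspace_dsum_topology)
  qed (simp_all add: topspace_dsum_topology inj_on_dsum_sum)
qed (rule dsum_sum_add)

end

lemma independent_summable_imp_embeds_direct_sum:
  fixes A :: "'a::{topological_ab_group_add, t2_space} set" and I :: "'i set"
  assumes "top_independent A" "abs_cauchy_summable A" "A \<approx> I"
  shows "\<exists>(T :: 'i \<Rightarrow> 'a topology) p e n (f :: ('i \<Rightarrow> 'a) \<Rightarrow> 'a). embeds_direct_sum I T p e n f"
proof -
  obtain h where "bij_betw h I A"
    using eqpoll_sym[OF assms(3)] unfolding eqpoll_def by blast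
  then interpret independent_summable_family A I h
    using assms(1,2) by unfold_locales
  show ?thesis
    using embeds_direct_sum_cyclic by blast
qed

theorem corollary5p2:
  fixes I :: "'i set"
  shows "(\<forall>(T :: 'i \<Rightarrow> 'b topology) p e n (f :: ('i \<Rightarrow> 'b) \<Rightarrow> 'a::{topological_ab_group_add, t2_space}).
            embeds_direct_sum I T p e n f
            \<longrightarrow> (\<exists>A :: 'a set. top_independent A \<and> abs_cauchy_summable A \<and> A \<approx> I))
       \<and> ((\<exists>A :: 'a set. top_independent A \<and> abs_cauchy_summable A \<and> A \<approx> I)
            \<longrightarrow> (\<exists>(T :: 'i \<Rightarrow> 'a topology) p e n (f :: ('i \<Rightarrow> 'a) \<Rightarrow> 'a).
                   embeds_direct_sum I T p e n f))"
  using embeds_direct_sum_imp_independent_summable independent_summable_imp_embeds_direct_sum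
  by blast

end
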